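(* Let $n\ge 2K$, let $m_1,\dots,m_n$ be fixed constants, and let $M=\{(x_1,\dots,x_n)\in\mathbb{R}^n: x_1<x_2<\dots<x_n\}$ carry the Poisson bracket $\{f,g\}=\sum_{1\le i<j\le n}\operatorname{sgn}(x_i-x_j)\bigl(\frac{\partial f}{\partial x_i}\frac{\partial g}{\partial x_j}-\frac{\partial f}{\partial x_j}\frac{\partial g}{\partial x_i}\bigr)$, i.e. the bracket with $\{x_i,x_k\}=\operatorname{sgn}(x_i-x_k)$. Then for any subsets $I,J\subseteq\{1,\dots,K\}$, $$\Bigl\{\prod_{p\in I} m_{2p-1}m_{2p}e^{x_{2p-1}-x_{2p}},\ \prod_{q\in J} m_{2q-1}m_{2q}e^{x_{2q-1}-x_{2q}}\Bigr\}=0.$$ *)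

theory Defs
  imports "HOL-Analysis.Analysis"
begin

text \<open>Points of R^n are represented as functions nat => real, with coordinates
x 1, ..., x n (other coordinates are irrelevant). Functions on R^n are maps
(nat => real) => real.\<close>

definition partial :: "((nat \<Rightarrow> real) \<Rightarrow> real) \<Rightarrow> nat \<Rightarrow> (nat \<Rightarrow> real) \<Rightarrow> real" where
  "partial f i x = deriv (\<lambda>t. f (x(i := t))) (x i)"

definition phase_space :: "nat \<Rightarrow> (nat \<Rightarrow> real) set" where
  "phase_space n = {x. \<forall>i j. 1 \<le> i \<and> i < j \<and> j \<le> n \<longrightarrow> x i < x j}"

definition poisson :: "nat \<Rightarrow> ((nat \<Rightarrow> real) \<Rightarrow> real) \<Rightarrow> ((nat \<Rightarrow> real) \<Rightarrow> real)
    \<Rightarrow> (nat \<Rightarrow> real) \<Rightarrow> real" where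
  "poisson n f g x = (\<Sum>(i, j) \<in> {(i, j). 1 \<le> i \<and> i < j \<and> j \<le> n}.
      sgn (x i - x j) * (partial f i x * partial g j x - partial f j x * partial g i x))"

end

theory Submission
  imports Defs
begin

text \<open>Each product has the form \<open>F = C \<cdot> exp (u \<bullet> x)\<close> with \<open>u\<close> a sum of dipoles
\<open>e(2p-1) - e(2p)\<close>, so \<open>\<partial>\<^sub>i F = F \<cdot> u i\<close>. On the phase space every sign \<open>sgn (x i - x j)\<close>
with \<open>i < j\<close> is \<open>-1\<close>, hence the bracket of two such functions is \<open>-F G \<omega>(u, v)\<close> for the
constant skew form \<open>\<omega>(u, v) = \<Sum>i<j. u i v j - u j v i\<close>, for which \<open>\<omega>(e a, e b) = sgn (b - a)\<close>.
By bilinearity it remains to evaluate \<open>\<omega>\<close> on two dipoles: for \<open>p \<noteq> q\<close> the four signs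
agree and cancel, for \<open>p = q\<close> the two mixed terms cancel.\<close>

lemma partial_prod_exp_diff:
  fixes c :: "nat \<Rightarrow> real" and a b :: "nat \<Rightarrow> nat"
  assumes "finite I"
  shows "partial (\<lambda>y. \<Prod>p\<in>I. c p * exp (y (a p) - y (b p))) i x
       = (\<Prod>p\<in>I. c p * exp (x (a p) - x (b p)))
         * (\<Sum>p\<in>I. indicator {a p} i - indicator {b p} i)"
proof -
  define C where "C = prod c I"
  define L where "L = (\<Sum>p\<in>I. x (a p) - x (b p))"
  define w where "w = (\<Sum>p\<in>I. indicator {a p} i - indicator {b p} i :: real)"
  have prod_eq: "(\<Prod>p\<in>I. c p * exp (y (a p) - y (b p))) = C * exp (\<Sum>p\<in>I. y (a p) - y (b p))"
    for y using assms by (simp add: C_def prod.distrib exp_sum)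
  have shift: "(\<Sum>p\<in>I. (x(i := t)) (a p) - (x(i := t)) (b p)) = L + w * (t - x i)" for t
    by (simp add: L_def w_def sum_distrib_right flip: sum.distrib)
       (rule sum.cong, auto simp: indicator_def)
  have along_axis: "(\<lambda>t. \<Prod>p\<in>I. c p * exp ((x(i := t)) (a p) - (x(i := t)) (b p)))
      = (\<lambda>t. C * exp (L + w * (t - x i)))"
    unfolding prod_eq shift ..
  have "((\<lambda>t. C * exp (L + w * (t - x i))) has_real_derivative C * exp L * w) (at (x i))"
    by (auto intro!: derivative_eq_intros)
  then show ?thesis
    unfolding partial_def along_axis by (simp add: DERIV_imp_deriv prod_eq L_def w_def)
qed

definition index_pairs :: "nat \<Rightarrow> (nat \<times> nat) set" where
  "index_pairs n = {(i, j). 1 \<le> i \<and> i < j \<and> j \<le> n}"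

definition skew_form :: "nat \<Rightarrow> (nat \<Rightarrow> real) \<Rightarrow> (nat \<Rightarrow> real) \<Rightarrow> real" where
  "skew_form n u v = (\<Sum>(i, j)\<in>index_pairs n. u i * v j - u j * v i)"

lemma finite_index_pairs: "finite (index_pairs n)"
  by (rule finite_subset[of _ "{1..n} \<times> {1..n}"]) (auto simp: index_pairs_def)

lemma poisson_eq_skew_form_log_gradients:
  assumes "x \<in> phase_space n"
    and "\<And>i. partial f i x = f x * u i" and "\<And>i. partial g i x = g x * v i"
  shows "poisson n f g x = - (f x * g x) * skew_form n u v"
proof -
  have "sgn (x i - x j) = -1" if "(i, j) \<in> index_pairs n" for i j
    using assms(1) that by (auto simp: phase_space_def index_pairs_def)
  then have "poisson n f g x = (\<Sum>(i, j)\<in>index_pairs n. - (f x * g x) * (u i * v j - u j * v i))"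
    unfolding poisson_def index_pairs_def[symmetric] assms(2,3)
    by (intro sum.cong) (auto simp: algebra_simps)
  then show ?thesis
    by (simp add: skew_form_def sum_distrib_left case_prod_unfold)
qed

lemma skew_form_sum:
  "skew_form n (\<lambda>i. \<Sum>p\<in>I. u p i) (\<lambda>j. \<Sum>q\<in>J. v q j)
     = (\<Sum>p\<in>I. \<Sum>q\<in>J. skew_form n (u p) (v q))"
proof -
  have "skew_form n (\<lambda>i. \<Sum>p\<in>I. u p i) (\<lambda>j. \<Sum>q\<in>J. v q j)
      = (\<Sum>(i, j)\<in>index_pairs n. \<Sum>p\<in>I. \<Sum>q\<in>J. u p i * v q j - u p j * v q i)"
    unfolding skew_form_def
    by (simp add: sum_product sum_subtractf case_prod_unfold flip: sum.distrib)
  also have "\<dots> = (\<Sum>p\<in>I. \<Sum>q\<in>J. skew_form n (u p) (v q))"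
    unfolding skew_form_def case_prod_unfold
    by (subst sum.swap, subst (2) sum.swap) (rule refl)
  finally show ?thesis .
qed

lemma skew_form_diff:
  "skew_form n (\<lambda>i. u i - u' i) v = skew_form n u v - skew_form n u' v"
  "skew_form n u (\<lambda>j. v j - v' j) = skew_form n u v - skew_form n u v'"
  unfolding skew_form_def by (simp_all add: algebra_simps flip: sum_subtractf)

lemma skew_form_indicator:
  assumes "a \<in> {1..n}" "b \<in> {1..n}"
  shows "skew_form n (indicator {a}) (indicator {b})
       = (if a < b then 1 else if b < a then -1 else 0)"
proof -
  have pair_sum: "(\<Sum>z\<in>index_pairs n. indicator {a} (fst z) * indicator {b} (snd z) :: real)
      = (if (a, b) \<in> index_pairs n then 1 else 0)" for a b
  proof -
    have "indicator {a} (fst z) * indicator {b} (snd z) = (if z = (a, b) then 1 else 0 :: real)"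
      for z by (cases z) (simp add: indicator_def)
    then show ?thesis
      by (simp add: sum.delta' finite_index_pairs)
  qed
  have "skew_form n (indicator {a}) (indicator {b})
      = (\<Sum>z\<in>index_pairs n. indicator {a} (fst z) * indicator {b} (snd z))
      - (\<Sum>z\<in>index_pairs n. indicator {b} (fst z) * indicator {a} (snd z))"
    by (simp add: skew_form_def case_prod_unfold sum_subtractf mult.commute)
  then show ?thesis
    unfolding pair_sum using assms by (simp add: index_pairs_def)
qed

lemma skew_form_dipole:
  assumes "1 \<le> p" "2 * p \<le> n" "1 \<le> q" "2 * q \<le> n"
  shows "skew_form n (\<lambda>i. indicator {2*p - 1} i - indicator {2*p} i)
                     (\<lambda>j. indicator {2*q - 1} j - indicator {2*q} j) = 0"
proof -
  have "2*p - 1 \<in> {1..n}" "2*p \<in> {1..n}" "2*q - 1 \<in> {1..n}" "2*q \<in> {1..n}"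
    using assms by auto
  then show ?thesis
    by (simp add: skew_form_diff skew_form_indicator) arith
qed

theorem lemma2:
  fixes n K :: nat and m :: "nat \<Rightarrow> real" and I J :: "nat set"
  assumes "n \<ge> 2 * K"
    and "I \<subseteq> {1..K}" and "J \<subseteq> {1..K}"
  shows "\<forall>x \<in> phase_space n.
    poisson n (\<lambda>y. \<Prod>p\<in>I. m (2*p - 1) * m (2*p) * exp (y (2*p - 1) - y (2*p)))
              (\<lambda>y. \<Prod>q\<in>J. m (2*q - 1) * m (2*q) * exp (y (2*q - 1) - y (2*q))) x = 0"
proof
  fix x assume x: "x \<in> phase_space n"
  let ?F = "\<lambda>y. \<Prod>p\<in>I. m (2*p - 1) * m (2*p) * exp (y (2*p - 1) - y (2*p))"
  let ?G = "\<lambda>y. \<Prod>q\<in>J. m (2*q - 1) * m (2*q) * exp (y (2*q - 1) - y (2*q))"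
  let ?dipole = "\<lambda>p i. indicator {2*p - 1} i - indicator {2*p} i :: real"
  have "finite I" "finite J"
    using assms(2,3) finite_subset by blast+
  then have "poisson n ?F ?G x
      = - (?F x * ?G x) * skew_form n (\<lambda>i. \<Sum>p\<in>I. ?dipole p i) (\<lambda>j. \<Sum>q\<in>J. ?dipole q j)"
    by (intro poisson_eq_skew_form_log_gradients[OF x]) (simp_all add: partial_prod_exp_diff)
  also have "\<dots> = - (?F x * ?G x) * (\<Sum>p\<in>I. \<Sum>q\<in>J. skew_form n (?dipole p) (?dipole q))"
    by (simp only: skew_form_sum)
  also have "\<dots> = 0"
  proof (intro sum.neutral ballI mult_eq_0_iff[THEN iffD2] disjI2)
    fix p q assume "p \<in> I" "q \<in> J"
    with assms show "skew_form n (?dipole p) (?dipole q) = 0"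
      by (intro skew_form_dipole) auto
  qed
  finally show "poisson n ?F ?G x = 0" .
qed

end
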